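(* Let $\mathrm{AF}_{\mathcal R}(Y^{++})$ be the set of families $(x_\lambda)\in\mathcal R^{Y^{++}}$ with almost finite support. For every $(x_\lambda)\in\mathrm{AF}_{\mathcal R}(Y^{++})$ the family $(x_\lambda E(\lambda))_{\lambda\in Y^{++}}$ is summable in $\mathcal R[[Y]]$, and the map $E:\mathrm{AF}_{\mathcal R}(Y^{++})\to\mathcal R[[Y]]^{W^v}$, $(x_\lambda)\mapsto\sum_{\lambda\in Y^{++}}x_\lambda E(\lambda)$, is a well-defined bijection. In particular every element of $\mathcal R[[Y]]^{W^v}$ has support contained in $Y^+$.
   Context: $I$ finite, $A$ a generalized Cartan matrix, $X,Y$ dual free $\mathbb Z$-modules of finite rank with free families $(\alpha_i)_{i\in I}\subset X$, $(\alpha_i^\vee)_{i\in I}\subset Y$, $\alpha_j(\alpha_i^\vee)=a_{i,j}$; $\mathbb A=Y\otimes\mathbb R$; $r_i(v)=v-\alpha_i(v)\alpha_i^\vee$; $W^v=\langle r_i\rangle$; $Q^\vee_+=\bigoplus\mathbb N\alpha_i^\vee$ and $x\le_{Q^\vee}y$ iff $y-x\in Q^\vee_+$; $C^v_f=\{\alpha_i>0\ \forall i\}$, $\mathcal T=\bigcup_w w\overline{C^v_f}$, $Y^+=Y\cap\mathcal T$, $Y^{++}=Y\cap\overline{C^v_f}$. A set $E\subset Y$ is almost finite if there is a finite $J\subset Y$ with every element of $E$ $\le_{Q^\vee}$ some element of $J$. $\mathcal R$ is a commutative ring. $\mathcal R[[Y]]$ is the set of formal series $\sum_{\lambda\in Y}a_\lambda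 e^\lambda$ with almost finite support, with $e^\lambda e^\mu=e^{\lambda+\mu}$; $\mathcal R[[Y]]^{W^v}$ is the set of such series with $a_{w(\lambda)}=a_\lambda$ for all $w\in W^v$. A family $(a_j)_{j\in J}$ in $\mathcal R[[Y]]$ is summable if for each $\lambda$ only finitely many $a_j$ have nonzero coefficient at $e^\lambda$ and the union of the supports is almost finite; its sum is taken coefficientwise. For $\lambda\in Y^{++}$, $E(\lambda)=\sum_{\mu\in W^v\lambda}e^\mu\in\mathcal R[[Y]]$. *)

theory Defs
  imports Main
begin

text \<open>The lattice Y is modelled as the functions 'n \<Rightarrow> int for a finite
type 'n (a free Z-module of finite rank CARD('n)).  Its dual X = Hom(Y,Z) is modelled by
the same type, via the perfect pairing below.  The index set I is a finite set of naturals.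
al i is the root alpha_i in X, alv i the coroot alpha_i^vee in Y.\<close>

type_synonym 'n lat = "'n \<Rightarrow> int"

definition pairing :: "'n::finite lat \<Rightarrow> 'n lat \<Rightarrow> int" where
  "pairing a y = (\<Sum>k\<in>UNIV. a k * y k)"

definition free_family :: "nat set \<Rightarrow> (nat \<Rightarrow> 'n::finite lat) \<Rightarrow> bool" where
  "free_family I f \<longleftrightarrow>
     (\<forall>c :: nat \<Rightarrow> int. (\<forall>k. (\<Sum>i\<in>I. c i * f i k) = 0) \<longrightarrow> (\<forall>i\<in>I. c i = 0))"

definition gen_cartan_matrix :: "nat set \<Rightarrow> (nat \<Rightarrow> nat \<Rightarrow> int) \<Rightarrow> bool" where
  "gen_cartan_matrix I a \<longleftrightarrow>
     (\<forall>i\<in>I. a i i = 2) \<and>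
     (\<forall>i\<in>I. \<forall>j\<in>I. i \<noteq> j \<longrightarrow> a i j \<le> 0) \<and>
     (\<forall>i\<in>I. \<forall>j\<in>I. a i j = 0 \<longleftrightarrow> a j i = 0)"

definition cartan :: "(nat \<Rightarrow> 'n::finite lat) \<Rightarrow> (nat \<Rightarrow> 'n lat) \<Rightarrow> nat \<Rightarrow> nat \<Rightarrow> int" where
  "cartan al alv i j = pairing (al j) (alv i)"

definition sref :: "(nat \<Rightarrow> 'n::finite lat) \<Rightarrow> (nat \<Rightarrow> 'n lat) \<Rightarrow> nat \<Rightarrow> 'n lat \<Rightarrow> 'n lat" where
  "sref al alv i v = (\<lambda>k. v k - pairing (al i) v * alv i k)"

text \<open>The vectorial Weyl group W^v generated by the r_i (the r_i are involutions,
so the monoid they generate is the group they generate).\<close>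
inductive_set weyl :: "nat set \<Rightarrow> (nat \<Rightarrow> 'n::finite lat) \<Rightarrow> (nat \<Rightarrow> 'n lat) \<Rightarrow> ('n lat \<Rightarrow> 'n lat) set"
  for I al alv where
  weyl_id: "id \<in> weyl I al alv"
| weyl_step: "w \<in> weyl I al alv \<Longrightarrow> i \<in> I \<Longrightarrow> sref al alv i \<circ> w \<in> weyl I al alv"

definition Ypp :: "nat set \<Rightarrow> (nat \<Rightarrow> 'n::finite lat) \<Rightarrow> 'n lat set" where
  "Ypp I al = {y. \<forall>i\<in>I. pairing (al i) y \<ge> 0}"

text \<open>Y^+ = Y \<inter> Tits cone = union of the w(Y^{++}).\<close>
definition Yp :: "nat set \<Rightarrow> (nat \<Rightarrow> 'n::finite lat) \<Rightarrow> (nat \<Rightarrow> 'n lat) \<Rightarrow> 'n lat set" where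
  "Yp I al alv = {w y | w y. w \<in> weyl I al alv \<and> y \<in> Ypp I al}"

definition Qvee_plus :: "nat set \<Rightarrow> (nat \<Rightarrow> 'n::finite lat) \<Rightarrow> 'n lat set" where
  "Qvee_plus I alv = {(\<lambda>k. \<Sum>i\<in>I. int (m i) * alv i k) | m :: nat \<Rightarrow> nat. True}"

definition leQ :: "nat set \<Rightarrow> (nat \<Rightarrow> 'n::finite lat) \<Rightarrow> 'n lat \<Rightarrow> 'n lat \<Rightarrow> bool" where
  "leQ I alv x y \<longleftrightarrow> (\<lambda>k. y k - x k) \<in> Qvee_plus I alv"

definition almost_finite :: "nat set \<Rightarrow> (nat \<Rightarrow> 'n::finite lat) \<Rightarrow> 'n lat set \<Rightarrow> bool" where
  "almost_finite I alv E \<longleftrightarrow> (\<exists>J. finite J \<and> (\<forall>e\<in>E. \<exists>j\<in>J. leQ I alv e j))"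

definition supp :: "('a \<Rightarrow> 'r::zero) \<Rightarrow> 'a set" where
  "supp a = {x. a x \<noteq> 0}"

text \<open>R[[Y]]: a series sum a_lambda e^lambda is represented by its coefficient function.\<close>
definition series :: "nat set \<Rightarrow> (nat \<Rightarrow> 'n::finite lat) \<Rightarrow> ('n lat \<Rightarrow> 'r::comm_ring_1) set" where
  "series I alv = {a. almost_finite I alv (supp a)}"

definition inv_series ::
  "nat set \<Rightarrow> (nat \<Rightarrow> 'n::finite lat) \<Rightarrow> (nat \<Rightarrow> 'n lat) \<Rightarrow> ('n lat \<Rightarrow> 'r::comm_ring_1) set" where
  "inv_series I al alv =
     {a \<in> series I alv. \<forall>w\<in>weyl I al alv. \<forall>lam. a (w lam) = a lam}"

definition summable_fam ::
  "nat set \<Rightarrow> (nat \<Rightarrow> 'n::finite lat) \<Rightarrow> 'j set \<Rightarrow> ('j \<Rightarrow> 'n lat \<Rightarrow> 'r::comm_ring_1) \<Rightarrow> bool" where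
  "summable_fam I alv J f \<longleftrightarrow>
     (\<forall>j\<in>J. f j \<in> series I alv) \<and>
     (\<forall>lam. finite {j\<in>J. f j lam \<noteq> 0}) \<and>
     almost_finite I alv (\<Union>j\<in>J. supp (f j))"

definition fam_sum :: "'j set \<Rightarrow> ('j \<Rightarrow> 'n lat \<Rightarrow> 'r::comm_ring_1) \<Rightarrow> 'n lat \<Rightarrow> 'r" where
  "fam_sum J f = (\<lambda>lam. \<Sum>j\<in>{j\<in>J. f j lam \<noteq> 0}. f j lam)"

definition Eorb ::
  "nat set \<Rightarrow> (nat \<Rightarrow> 'n::finite lat) \<Rightarrow> (nat \<Rightarrow> 'n lat) \<Rightarrow> 'n lat \<Rightarrow> 'n lat \<Rightarrow> 'r::comm_ring_1" where
  "Eorb I al alv lam = (\<lambda>mu. if mu \<in> (\<lambda>w. w lam) ` weyl I al alv then 1 else 0)"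

text \<open>AF_R(Y^{++}): families indexed by Y^{++} (extended by 0 outside Y^{++})
with almost finite support.\<close>
definition AF :: "nat set \<Rightarrow> (nat \<Rightarrow> 'n::finite lat) \<Rightarrow> (nat \<Rightarrow> 'n lat) \<Rightarrow> ('n lat \<Rightarrow> 'r::comm_ring_1) set" where
  "AF I al alv = {x. (\<forall>lam. lam \<notin> Ypp I al \<longrightarrow> x lam = 0) \<and> almost_finite I alv (supp x)}"

definition Emap ::
  "nat set \<Rightarrow> (nat \<Rightarrow> 'n::finite lat) \<Rightarrow> (nat \<Rightarrow> 'n lat) \<Rightarrow> ('n lat \<Rightarrow> 'r::comm_ring_1) \<Rightarrow> 'n lat \<Rightarrow> 'r" where
  "Emap I al alv x = fam_sum (Ypp I al) (\<lambda>lam mu. x lam * Eorb I al alv lam mu)"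

end

theory Submission
  imports Defs "HOL-Library.FuncSet"
begin

text \<open>Everything rests on dominance: for \<open>\<lambda> \<in> Y\<^sup>+\<^sup>+\<close> and \<open>w \<in> W\<^sup>v\<close> one has
  \<open>w \<lambda> \<le>\<^sub>Q \<lambda>\<close>. It follows by induction on the length of \<open>w\<close> from Tits' positivity
  (if \<open>l(r\<^sub>i w) \<ge> l(w)\<close> then \<open>\<alpha>\<^sub>i(w \<lambda>) \<ge> 0\<close>), which reduces to the dihedral groups
  \<open>\<langle>r\<^sub>i, r\<^sub>j\<rangle>\<close> where it is an explicit computation. Dominance makes each orbit sum
  \<open>E(\<lambda>)\<close> lie below \<open>\<lambda>\<close>, so the families \<open>x\<^sub>\<lambda> E(\<lambda>)\<close> are summable; it also shows that
  an orbit contains at most one dominant weight, so \<open>\<Sum> x\<^sub>\<lambda> E(\<lambda>)\<close> takes the value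
  \<open>x\<^sub>\<lambda>\<close> on the orbit of \<open>\<lambda>\<close> and \<open>0\<close> off the Tits cone. Conversely, if \<open>a\<close> is invariant
  with almost finite support and \<open>a(\<mu>) \<noteq> 0\<close>, then the weights of the orbit of \<open>\<mu>\<close>
  above \<open>\<mu>\<close> lie in a finite set; a maximal one is dominant, since \<open>\<alpha>\<^sub>i(\<nu>) < 0\<close>
  gives \<open>\<nu> <\<^sub>Q r\<^sub>i \<nu>\<close>. Hence \<open>a\<close> is the image of its restriction to \<open>Y\<^sup>+\<^sup>+\<close>.\<close>

section \<open>Simple reflections and reduced words\<close>

lemma pairing_add: "pairing a (\<lambda>k. v k + w k) = pairing a v + pairing a w"
  unfolding pairing_def by (simp add: algebra_simps sum.distrib)

lemma pairing_diff: "pairing a (\<lambda>k. v k - w k) = pairing a v - pairing a w"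
  unfolding pairing_def by (simp add: algebra_simps sum_subtractf)

lemma pairing_scale: "pairing a (\<lambda>k. c * v k) = c * pairing a v"
  unfolding pairing_def by (simp add: algebra_simps sum_distrib_left)

lemma pairing_sref:
  "pairing b (sref al alv i v) = pairing b v - pairing (al i) v * pairing b (alv i)"
  unfolding sref_def by (simp add: pairing_diff pairing_scale)

lemma sref_involutive:
  assumes "pairing (al i) (alv i) = 2"
  shows "sref al alv i (sref al alv i v) = v"
proof -
  have "pairing (al i) (sref al alv i v) = - pairing (al i) v"
    using assms by (simp add: pairing_sref)
  then show ?thesis
    unfolding sref_def[of al alv i "sref al alv i v"] by (simp add: sref_def)
qed

lemma sref_sref_comp:
  assumes "pairing (al i) (alv i) = 2"
  shows "sref al alv i \<circ> (sref al alv i \<circ> f) = f"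
  using sref_involutive[of al i alv, OF assms] by (simp add: fun_eq_iff)

primrec sref_word ::
  "(nat \<Rightarrow> 'n::finite lat) \<Rightarrow> (nat \<Rightarrow> 'n lat) \<Rightarrow> nat list \<Rightarrow> 'n lat \<Rightarrow> 'n lat"
  where
    "sref_word al alv [] = id"
  | "sref_word al alv (i # ws) = sref al alv i \<circ> sref_word al alv ws"

lemma sref_word_append: "sref_word al alv (xs @ ys) = sref_word al alv xs \<circ> sref_word al alv ys"
  by (induction xs) auto

lemma sref_word_rev_comp:
  assumes "\<And>i. i \<in> set ws \<Longrightarrow> pairing (al i) (alv i) = 2"
  shows "sref_word al alv (rev ws) \<circ> sref_word al alv ws = id"
  using assms
proof (induction ws)
  case (Cons i ws)
  have "sref_word al alv (rev (i # ws)) \<circ> sref_word al alv (i # ws)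
      = sref_word al alv (rev ws) \<circ> (sref al alv i \<circ> (sref al alv i \<circ> sref_word al alv ws))"
    by (simp add: sref_word_append comp_assoc)
  also have "\<dots> = sref_word al alv (rev ws) \<circ> sref_word al alv ws"
    using Cons.prems by (simp add: sref_sref_comp)
  also have "\<dots> = id"
    by (rule Cons.IH) (simp add: Cons.prems)
  finally show ?case .
qed simp

definition weyl_sub ::
  "(nat \<Rightarrow> 'n::finite lat) \<Rightarrow> (nat \<Rightarrow> 'n lat) \<Rightarrow> nat set \<Rightarrow> ('n lat \<Rightarrow> 'n lat) set"
  where "weyl_sub al alv S = {sref_word al alv ws | ws. set ws \<subseteq> S}"

definition wlength ::
  "(nat \<Rightarrow> 'n::finite lat) \<Rightarrow> (nat \<Rightarrow> 'n lat) \<Rightarrow> nat set \<Rightarrow> ('n lat \<Rightarrow> 'n lat) \<Rightarrow> nat"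
  where "wlength al alv S w =
    (LEAST n. \<exists>ws. set ws \<subseteq> S \<and> length ws = n \<and> sref_word al alv ws = w)"

lemma sref_word_in_weyl_sub: "set ws \<subseteq> S \<Longrightarrow> sref_word al alv ws \<in> weyl_sub al alv S"
  unfolding weyl_sub_def by auto

lemma id_in_weyl_sub: "id \<in> weyl_sub al alv S"
  using sref_word_in_weyl_sub[of "[]"] by simp

lemma sref_in_weyl_sub: "i \<in> S \<Longrightarrow> sref al alv i \<in> weyl_sub al alv S"
  using sref_word_in_weyl_sub[of "[i]"] by simp

lemma weyl_sub_comp:
  assumes "x \<in> weyl_sub al alv S" "y \<in> weyl_sub al alv S"
  shows "x \<circ> y \<in> weyl_sub al alv S"
proof -
  obtain xs ys where "set xs \<subseteq> S" "set ys \<subseteq> S" "x = sref_word al alv xs" "y = sref_word al alv ys"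
    using assms unfolding weyl_sub_def by auto
  then show ?thesis using sref_word_in_weyl_sub[of "xs @ ys" S] by (simp add: sref_word_append)
qed

lemma weyl_sub_mono: "S \<subseteq> T \<Longrightarrow> x \<in> weyl_sub al alv S \<Longrightarrow> x \<in> weyl_sub al alv T"
  unfolding weyl_sub_def by auto

lemma weyl_sub_inverse:
  assumes "u \<in> weyl_sub al alv S" "\<And>i. i \<in> S \<Longrightarrow> pairing (al i) (alv i) = 2"
  obtains u' where "u' \<in> weyl_sub al alv S" "u' \<circ> u = id"
proof -
  obtain ws where "set ws \<subseteq> S" "u = sref_word al alv ws"
    using assms(1) unfolding weyl_sub_def by auto
  then show ?thesis
    using that[of "sref_word al alv (rev ws)"] sref_word_rev_comp[of ws al alv] assms(2)
      sref_word_in_weyl_sub[of "rev ws" S] by auto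
qed

lemma weyl_eq_weyl_sub: "weyl I al alv = weyl_sub al alv I"
proof
  show "weyl I al alv \<subseteq> weyl_sub al alv I"
  proof
    fix w assume "w \<in> weyl I al alv"
    then show "w \<in> weyl_sub al alv I"
      by induction (blast intro: id_in_weyl_sub weyl_sub_comp sref_in_weyl_sub)+
  qed
next
  show "weyl_sub al alv I \<subseteq> weyl I al alv"
  proof
    fix w assume "w \<in> weyl_sub al alv I"
    then obtain ws where "set ws \<subseteq> I" "w = sref_word al alv ws" unfolding weyl_sub_def by auto
    then show "w \<in> weyl I al alv"
      by (induction ws arbitrary: w) (auto intro: weyl.intros)
  qed
qed

lemma wlength_le: "set ws \<subseteq> S \<Longrightarrow> wlength al alv S (sref_word al alv ws) \<le> length ws"
  unfolding wlength_def by (rule Least_le) auto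

lemma reduced_word_exists:
  assumes "w \<in> weyl_sub al alv S"
  obtains ws where "set ws \<subseteq> S" "length ws = wlength al alv S w" "sref_word al alv ws = w"
proof -
  have "\<exists>ws. set ws \<subseteq> S \<and> length ws = wlength al alv S w \<and> sref_word al alv ws = w"
    unfolding wlength_def by (rule LeastI_ex) (use assms in \<open>auto simp: weyl_sub_def\<close>)
  then show ?thesis using that by blast
qed

lemma wlength_comp:
  assumes "x \<in> weyl_sub al alv S" "y \<in> weyl_sub al alv S"
  shows "wlength al alv S (x \<circ> y) \<le> wlength al alv S x + wlength al alv S y"
proof -
  obtain xs where "set xs \<subseteq> S" "length xs = wlength al alv S x" "sref_word al alv xs = x"
    using reduced_word_exists[OF assms(1)] .
  moreover obtain ys where "set ys \<subseteq> S" "length ys = wlength al alv S y" "sref_word al alv ys = y"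
    using reduced_word_exists[OF assms(2)] .
  ultimately show ?thesis using wlength_le[of "xs @ ys" S al alv] by (simp add: sref_word_append)
qed

lemma wlength_mono:
  assumes "S \<subseteq> T" "x \<in> weyl_sub al alv S"
  shows "wlength al alv T x \<le> wlength al alv S x"
  using reduced_word_exists[OF assms(2)] wlength_le[of _ T al alv] assms(1) by (metis order_trans)

lemma wlength_sref: "i \<in> S \<Longrightarrow> wlength al alv S (sref al alv i) \<le> 1"
  using wlength_le[of "[i]" S al alv] by simp

lemma weyl_sub_cases:
  assumes "w \<in> weyl_sub al alv S"
  obtains "w = id"
  | j w' where "j \<in> S" "w' \<in> weyl_sub al alv S" "w = sref al alv j \<circ> w'"
      "wlength al alv S w' < wlength al alv S w"
proof -
  obtain ws where ws: "set ws \<subseteq> S" "length ws = wlength al alv S w" "sref_word al alv ws = w"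
    using reduced_word_exists[OF assms] .
  show ?thesis
  proof (cases ws)
    case Nil
    then show ?thesis using ws that(1) by simp
  next
    case (Cons j js)
    then show ?thesis
      using ws that(2)[of j "sref_word al alv js"] wlength_le[of js S al alv]
        sref_word_in_weyl_sub[of js S] by auto
  qed
qed

lemma parabolic_decomposition:
  assumes u: "u \<in> weyl_sub al alv T" and "S \<subseteq> T"
    and involutive: "\<And>k. k \<in> S \<Longrightarrow> pairing (al k) (alv k) = 2"
    and j: "j \<in> S" and shorter: "wlength al alv T (sref al alv j \<circ> u) < wlength al alv T u"
  obtains x v where "x \<in> weyl_sub al alv S" "v \<in> weyl_sub al alv T" "u = x \<circ> v"
    "wlength al alv S x + wlength al alv T v \<le> wlength al alv T u"
    "wlength al alv T v < wlength al alv T u"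
    "\<And>k. k \<in> S \<Longrightarrow> wlength al alv T v \<le> wlength al alv T (sref al alv k \<circ> v)"
proof -
  let ?l = "wlength al alv T" and ?lS = "wlength al alv S"
  define B where
    "B = {v \<in> weyl_sub al alv T. \<exists>x \<in> weyl_sub al alv S. u = x \<circ> v \<and> ?lS x + ?l v \<le> ?l u}"
  have in_B: "sref al alv k \<circ> v \<in> B"
    if "k \<in> S" "v \<in> weyl_sub al alv T" "x \<in> weyl_sub al alv S" "u = x \<circ> v"
      "?lS x + ?l (sref al alv k \<circ> v) + 1 \<le> ?l u" for k v x
  proof -
    have "sref al alv k \<circ> (sref al alv k \<circ> v) = v"
      by (rule sref_sref_comp[of al k alv, OF involutive[OF that(1)]])
    then have "u = (x \<circ> sref al alv k) \<circ> (sref al alv k \<circ> v)"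
      by (simp add: that(4) comp_assoc)
    moreover have "?lS (x \<circ> sref al alv k) \<le> ?lS x + 1"
      using wlength_comp[OF that(3) sref_in_weyl_sub[OF that(1)]] wlength_sref[OF that(1), of al alv] by simp
    ultimately show ?thesis
      unfolding B_def using that \<open>S \<subseteq> T\<close>
      by (auto intro!: weyl_sub_comp sref_in_weyl_sub)
  qed
  have "sref al alv j \<circ> u \<in> B"
    using in_B[OF j u id_in_weyl_sub] shorter by (simp add: wlength_le[of "[]", simplified])
  then obtain v where v: "v \<in> B" and v_min: "\<And>v'. v' \<in> B \<Longrightarrow> ?l v \<le> ?l v'"
    using ex_has_least_nat[of "\<lambda>v. v \<in> B" "sref al alv j \<circ> u" ?l] by blast
  then obtain x where vx: "v \<in> weyl_sub al alv T" "x \<in> weyl_sub al alv S" "u = x \<circ> v" "?lS x + ?l v \<le> ?l u"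
    unfolding B_def by auto
  show ?thesis
  proof (rule that[OF vx(2,1,3,4)])
    show "?l v < ?l u" using v_min[OF \<open>sref al alv j \<circ> u \<in> B\<close>] shorter by simp
    show "?l v \<le> ?l (sref al alv k \<circ> v)" if "k \<in> S" for k
    proof (rule ccontr)
      assume "\<not> ?l v \<le> ?l (sref al alv k \<circ> v)"
      moreover from this have "?lS x + ?l (sref al alv k \<circ> v) + 1 \<le> ?l u" using vx(4) by simp
      ultimately show False using v_min[OF in_B[OF that vx(1,2,3)]] by simp
    qed
  qed
qed

lemma parabolic_factor_length:
  assumes "S \<subseteq> T" "i \<in> S" "x \<in> weyl_sub al alv S" "v \<in> weyl_sub al alv T" "u = x \<circ> v"
    and "wlength al alv S x + wlength al alv T v \<le> wlength al alv T u"
    and "wlength al alv T u \<le> wlength al alv T (sref al alv i \<circ> u)"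
  shows "wlength al alv S x \<le> wlength al alv S (sref al alv i \<circ> x)"
proof -
  have ix: "sref al alv i \<circ> x \<in> weyl_sub al alv S"
    using assms(2,3) by (simp add: sref_in_weyl_sub weyl_sub_comp)
  have "wlength al alv T (sref al alv i \<circ> u) = wlength al alv T ((sref al alv i \<circ> x) \<circ> v)"
    using assms(5) by (simp add: comp_assoc)
  also have "\<dots> \<le> wlength al alv T (sref al alv i \<circ> x) + wlength al alv T v"
    using wlength_comp[OF weyl_sub_mono[OF assms(1) ix] assms(4)] .
  also have "\<dots> \<le> wlength al alv S (sref al alv i \<circ> x) + wlength al alv T v"
    using wlength_mono[OF assms(1) ix] by simp
  finally show ?thesis using assms(6,7) by simp
qed

section \<open>Dihedral subgroups\<close>

fun alt_word :: "nat \<Rightarrow> nat \<Rightarrow> nat \<Rightarrow> nat list" where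
  "alt_word a b 0 = []"
| "alt_word a b (Suc n) = a # alt_word b a n"

lemma length_alt_word [simp]: "length (alt_word a b n) = n"
  by (induction n arbitrary: a b) auto

lemma set_alt_word: "set (alt_word a b n) \<subseteq> {a, b}"
  by (induction n arbitrary: a b) auto

lemma alt_word_Suc_snoc: "alt_word a b (Suc n) = alt_word a b n @ [if even n then a else b]"
  by (induction n arbitrary: a b) auto

lemma alt_word_add:
  "alt_word a b (m + n) = alt_word a b m @ (if even m then alt_word a b n else alt_word b a n)"
  by (induction m arbitrary: a b) auto

lemma alternating_if_no_square:
  assumes "set ws \<subseteq> {i, j}" "i \<noteq> j" "\<forall>ws'. ws \<noteq> i # ws'" "\<forall>xs k ys. ws \<noteq> xs @ k # k # ys"
  shows "ws = alt_word j i (length ws)"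
  using assms
proof (induction ws arbitrary: i j)
  case (Cons l ws)
  then have "l = j" by auto
  moreover have "ws = alt_word i j (length ws)"
  proof (rule Cons.IH)
    show "\<forall>ws'. ws \<noteq> j # ws'" using Cons.prems(4) \<open>l = j\<close> by (metis append_Nil)
    show "\<forall>xs k ys. ws \<noteq> xs @ k # k # ys" using Cons.prems(4) by (metis append_Cons)
  qed (use Cons.prems in auto)
  ultimately show ?case by simp
qed simp

fun dihedral_coef :: "int \<Rightarrow> int \<Rightarrow> nat \<Rightarrow> int \<times> int" where
  "dihedral_coef a b 0 = (1, 0)"
| "dihedral_coef a b (Suc n) = (let (c, d) = dihedral_coef a b n in
      if even n then (c, - b * c - d) else (- a * d - c, d))"

lemma pairing_alt_word:
  assumes "pairing (al i) (alv i) = 2" "pairing (al j) (alv j) = 2"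
  defines "cd \<equiv> dihedral_coef (pairing (al j) (alv i)) (pairing (al i) (alv j))"
  shows "pairing (al i) (sref_word al alv (alt_word j i n) v) =
    fst (cd n) * pairing (al i) v + snd (cd n) * pairing (al j) v"
proof (induction n arbitrary: v)
  case (Suc n)
  obtain c d where cd_n: "cd n = (c, d)" by fastforce
  let ?k = "if even n then j else i"
  have "pairing (al i) (sref_word al alv (alt_word j i (Suc n)) v)
      = pairing (al i) (sref_word al alv (alt_word j i n) (sref al alv ?k v))"
    unfolding alt_word_Suc_snoc sref_word_append by simp
  also have "\<dots> = c * pairing (al i) (sref al alv ?k v) + d * pairing (al j) (sref al alv ?k v)"
    using Suc cd_n by simp
  finally show ?case
    using cd_n assms(1,2)
    by (cases "even n") (simp_all add: cd_def pairing_sref algebra_simps del: alt_word.simps)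
qed (simp add: cd_def)

fun alt_word_shift :: "int \<Rightarrow> int \<Rightarrow> int \<Rightarrow> int \<Rightarrow> bool \<Rightarrow> nat \<Rightarrow> int \<times> int" where
  "alt_word_shift a b x y s 0 = (0, 0)"
| "alt_word_shift a b x y True (Suc n) =
     (let (p, q) = alt_word_shift a b x y False n in (p - (x + 2 * p + q * b), q))"
| "alt_word_shift a b x y False (Suc n) =
     (let (p, q) = alt_word_shift a b x y True n in (p, q - (y + p * a + 2 * q)))"

lemma sref_word_alt_word:
  fixes v :: "'n::finite lat"
  assumes "pairing (al i) (alv i) = 2" "pairing (al j) (alv j) = 2"
  defines "sh \<equiv> alt_word_shift (pairing (al j) (alv i)) (pairing (al i) (alv j))
                  (pairing (al i) v) (pairing (al j) v)"
  shows "sref_word al alv (alt_word i j n) v =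
           (\<lambda>k. v k + fst (sh True n) * alv i k + snd (sh True n) * alv j k)
       \<and> sref_word al alv (alt_word j i n) v =
           (\<lambda>k. v k + fst (sh False n) * alv i k + snd (sh False n) * alv j k)"
proof (induction n)
  case (Suc n)
  obtain p q where pq: "sh False n = (p, q)" by fastforce
  obtain p' q' where pq': "sh True n = (p', q')" by fastforce
  have "pairing (al i) (\<lambda>k. v k + p * alv i k + q * alv j k)
      = pairing (al i) v + 2 * p + q * pairing (al i) (alv j)"
    and "pairing (al j) (\<lambda>k. v k + p' * alv i k + q' * alv j k)
      = pairing (al j) v + p' * pairing (al j) (alv i) + 2 * q'"
    using assms(1,2) by (simp_all add: pairing_add pairing_scale)
  then show ?case
    using Suc pq pq' by (auto simp: sh_def sref_def algebra_simps)
qed (simp add: sh_def)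

lemma finite_type_rank2_cases:
  fixes a b :: int
  assumes "a \<le> 0" "b \<le> 0" "a = 0 \<longleftrightarrow> b = 0" "a * b < 4"
  shows "(a, b) \<in> {(0, 0), (-1, -1), (-1, -2), (-2, -1), (-1, -3), (-3, -1)}"
proof (cases "a = 0")
  case False
  then have "a \<le> -1" "b \<le> -1" using assms by auto
  moreover from this have "- a \<le> a * b" "- b \<le> a * b"
    using mult_left_mono_neg[of b "-1" a] mult_right_mono_neg[of a "-1" b] by simp_all
  ultimately have "a \<in> {-3, -2, -1}" "b \<in> {-3, -2, -1}" using assms(4) by auto
  then show ?thesis using assms(4) by auto
qed (use assms in auto)

text \<open>The second property is the braid relation of length \<open>m = 2, 3, 4, 6\<close>.\<close>

lemma dihedral_finite_type:
  fixes a b :: int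
  assumes "a \<le> 0" "b \<le> 0" "a = 0 \<longleftrightarrow> b = 0" "a * b < 4"
  obtains m where "1 \<le> m" "\<And>x y. alt_word_shift a b x y True m = alt_word_shift a b x y False m"
    "\<And>n. n < m \<Longrightarrow> 0 \<le> fst (dihedral_coef a b n) \<and> 0 \<le> snd (dihedral_coef a b n)"
proof -
  have "(a, b) \<in> {(0, 0), (-1, -1), (-1, -2), (-2, -1), (-1, -3), (-3, -1)}"
    using finite_type_rank2_cases[OF assms] .
  then consider "a = 0 \<and> b = 0" | "a = -1 \<and> b = -1" | "a = -1 \<and> b = -2 \<or> a = -2 \<and> b = -1"
    | "a = -1 \<and> b = -3 \<or> a = -3 \<and> b = -1"
    by auto
  then show ?thesis
  proof cases
    case 1
    then show ?thesis by (intro that[of 2]) (auto simp: numeral_eq_Suc less_Suc_eq)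
  next
    case 2
    then show ?thesis by (intro that[of 3]) (auto simp: numeral_eq_Suc less_Suc_eq)
  next
    case 3
    then show ?thesis by (intro that[of 4]) (auto simp: numeral_eq_Suc less_Suc_eq)
  next
    case 4
    then show ?thesis by (intro that[of 6]) (auto simp: numeral_eq_Suc less_Suc_eq)
  qed
qed

lemma dihedral_coef_nonneg_infinite_type:
  fixes a b :: int
  assumes "a \<le> 0" "b \<le> 0" "4 \<le> a * b"
  shows "0 \<le> fst (dihedral_coef a b n) \<and> 0 \<le> snd (dihedral_coef a b n) \<and>
     (if even n then 2 * snd (dihedral_coef a b n) \<le> - b * fst (dihedral_coef a b n)
      else 2 * fst (dihedral_coef a b n) \<le> - a * snd (dihedral_coef a b n))"
proof (induction n)
  case (Suc n)
  obtain c d where cd: "dihedral_coef a b n = (c, d)" by fastforce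
  have A: "0 \<le> - a" and B: "0 \<le> - b" and AB: "4 \<le> (- a) * (- b)" using assms by auto
  show ?case
  proof (cases "even n")
    case True
    then have h: "0 \<le> c" "0 \<le> d" "2 * d \<le> - b * c" using Suc cd by auto
    have "(- a) * (2 * d) \<le> (- a) * (- b * c)" using h A by (intro mult_left_mono)
    moreover have "4 * c \<le> ((- a) * (- b)) * c" using AB h by (intro mult_right_mono)
    ultimately show ?thesis using True cd h by (simp add: algebra_simps)
  next
    case False
    then have h: "0 \<le> c" "0 \<le> d" "2 * c \<le> - a * d" using Suc cd by auto
    have "(- b) * (2 * c) \<le> (- b) * (- a * d)" using h B by (intro mult_left_mono)
    moreover have "4 * d \<le> ((- a) * (- b)) * d" using AB h by (intro mult_right_mono)
    ultimately show ?thesis using False cd h by (simp add: algebra_simps)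
  qed
qed (use assms in simp)

lemma rank2_reduced_word:
  assumes "i \<noteq> j" "pairing (al i) (alv i) = 2" "pairing (al j) (alv j) = 2"
    and x: "x \<in> weyl_sub al alv {i, j}"
    and len: "wlength al alv {i, j} x \<le> wlength al alv {i, j} (sref al alv i \<circ> x)"
  shows "sref_word al alv (alt_word j i (wlength al alv {i, j} x)) = x"
proof -
  obtain ws where ws: "set ws \<subseteq> {i, j}" "length ws = wlength al alv {i, j} x" "sref_word al alv ws = x"
    using reduced_word_exists[OF x] .
  have involutive: "pairing (al k) (alv k) = 2" if "k \<in> {i, j}" for k
    using that assms(2,3) by auto
  have "\<forall>ws'. ws \<noteq> i # ws'"
  proof (intro allI notI)
    fix ws' assume "ws = i # ws'"
    then have "sref al alv i \<circ> x = sref_word al alv ws'"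
      using ws(3) sref_sref_comp[of al i alv, OF assms(2)] by auto
    then show False
      using wlength_le[of ws' "{i, j}" al alv] ws(1,2) len \<open>ws = i # ws'\<close> by simp
  qed
  moreover have "\<forall>xs k ys. ws \<noteq> xs @ k # k # ys"
  proof (intro allI notI)
    fix xs k ys assume ws_eq: "ws = xs @ k # k # ys"
    then have "sref_word al alv (xs @ ys) = x"
      using ws involutive[of k] by (simp add: sref_word_append sref_sref_comp comp_assoc)
    then show False
      using wlength_le[of "xs @ ys" "{i, j}" al alv] ws ws_eq by auto
  qed
  ultimately have "ws = alt_word j i (length ws)"
    using alternating_if_no_square[OF ws(1) assms(1)] by blast
  then show ?thesis using ws by simp
qed

lemma rank2_length_bound:
  assumes "pairing (al i) (alv i) = 2" "1 \<le> m"
    and braid: "sref_word al alv (alt_word i j m) = sref_word al alv (alt_word j i m)"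
    and x: "sref_word al alv (alt_word j i n) = x"
    and len: "n \<le> wlength al alv {i, j} (sref al alv i \<circ> x)"
  shows "n < m"
proof (rule ccontr)
  assume "\<not> n < m"
  then obtain r where n: "n = m + r" using le_Suc_ex not_less by blast
  obtain m' where m': "m = Suc m'" using assms(2) by (cases m) auto
  define rest where "rest = (if even m then alt_word j i r else alt_word i j r)"
  have "x = sref_word al alv (alt_word i j m @ rest)"
    using x n braid by (simp add: alt_word_add rest_def sref_word_append)
  also have "\<dots> = sref al alv i \<circ> sref_word al alv (alt_word j i m' @ rest)"
    using m' by simp
  finally have "sref al alv i \<circ> x = sref_word al alv (alt_word j i m' @ rest)"
    using sref_sref_comp[of al i alv, OF assms(1)] by simp
  moreover have "set (alt_word j i m' @ rest) \<subseteq> {i, j}"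
    using set_alt_word[of j i] set_alt_word[of i j] by (auto simp: rest_def)
  moreover have "length rest = r" by (simp add: rest_def)
  ultimately have "wlength al alv {i, j} (sref al alv i \<circ> x) \<le> m' + r"
    using wlength_le[of "alt_word j i m' @ rest" "{i, j}" al alv] by simp
  then show False using len n m' by simp
qed

lemma rank2_positivity:
  assumes "i \<noteq> j" "pairing (al i) (alv i) = 2" "pairing (al j) (alv j) = 2"
    and a: "pairing (al j) (alv i) \<le> 0" and b: "pairing (al i) (alv j) \<le> 0"
    and ab: "pairing (al j) (alv i) = 0 \<longleftrightarrow> pairing (al i) (alv j) = 0"
    and x: "x \<in> weyl_sub al alv {i, j}"
    and len: "wlength al alv {i, j} x \<le> wlength al alv {i, j} (sref al alv i \<circ> x)"
  obtains c d where "0 \<le> c" "0 \<le> d"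
    "\<And>v. pairing (al i) (x v) = c * pairing (al i) v + d * pairing (al j) v"
proof -
  define n where "n = wlength al alv {i, j} x"
  let ?cd = "dihedral_coef (pairing (al j) (alv i)) (pairing (al i) (alv j)) n"
  have x_alt: "sref_word al alv (alt_word j i n) = x"
    unfolding n_def by (rule rank2_reduced_word[OF assms(1-3) x len])
  have "0 \<le> fst ?cd \<and> 0 \<le> snd ?cd"
  proof (cases "4 \<le> pairing (al j) (alv i) * pairing (al i) (alv j)")
    case True
    then show ?thesis using dihedral_coef_nonneg_infinite_type[OF a b] by blast
  next
    case False
    then obtain m where m: "1 \<le> m"
      "\<And>x y. alt_word_shift (pairing (al j) (alv i)) (pairing (al i) (alv j)) x y True m
           = alt_word_shift (pairing (al j) (alv i)) (pairing (al i) (alv j)) x y False m"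
      "\<And>n. n < m \<Longrightarrow> 0 \<le> fst (dihedral_coef (pairing (al j) (alv i)) (pairing (al i) (alv j)) n)
                     \<and> 0 \<le> snd (dihedral_coef (pairing (al j) (alv i)) (pairing (al i) (alv j)) n)"
      using dihedral_finite_type[OF a b ab] by (metis not_le)
    have "sref_word al alv (alt_word i j m) = sref_word al alv (alt_word j i m)"
      using sref_word_alt_word[where n = m, OF assms(2,3)] m(2) by (simp add: fun_eq_iff)
    then have "n < m"
      using rank2_length_bound[OF assms(2) m(1) _ x_alt] len n_def by blast
    then show ?thesis using m(3) by blast
  qed
  moreover have "pairing (al i) (x v) = fst ?cd * pairing (al i) v + snd ?cd * pairing (al j) v" for v
    using pairing_alt_word[OF assms(2,3), of n v] x_alt by simp
  ultimately show ?thesis using that by blast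
qed

section \<open>The order \<open>\<le>\<^sub>Q\<close> and summable families\<close>

lemma free_family_coeff_eq:
  assumes "free_family I f" "\<And>k. (\<Sum>i\<in>I. c i * f i k) = (\<Sum>i\<in>I. d i * f i k)" "i \<in> I"
  shows "c i = d i"
proof -
  have "\<forall>k. (\<Sum>i\<in>I. (c i - d i) * f i k) = 0"
    using assms(2) by (simp add: algebra_simps sum_subtractf)
  then show ?thesis using assms(1,3) unfolding free_family_def by fastforce
qed

lemma leQ_iff:
  "leQ I alv x y \<longleftrightarrow> (\<exists>m :: nat \<Rightarrow> nat. \<forall>k. y k - x k = (\<Sum>i\<in>I. int (m i) * alv i k))"
  unfolding leQ_def Qvee_plus_def by (auto simp: fun_eq_iff)

lemma leQ_refl: "leQ I alv x x"
  unfolding leQ_iff by (intro exI[of _ "\<lambda>_. 0"]) simp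

lemma leQ_trans:
  assumes "leQ I alv x y" "leQ I alv y z"
  shows "leQ I alv x z"
proof -
  obtain m m' where "\<forall>k. y k - x k = (\<Sum>i\<in>I. int (m i) * alv i k)"
    and "\<forall>k. z k - y k = (\<Sum>i\<in>I. int (m' i) * alv i k)"
    using assms unfolding leQ_iff by blast
  then have "\<forall>k. z k - x k = (\<Sum>i\<in>I. int (m i + m' i) * alv i k)"
    by (simp add: algebra_simps sum.distrib)
  then show ?thesis unfolding leQ_iff by (rule exI[where x = "\<lambda>i. m i + m' i"])
qed

lemma leQ_antisym:
  assumes "free_family I alv" "leQ I alv x y" "leQ I alv y x"
  shows "x = y"
proof -
  obtain m m' where m: "\<forall>k. y k - x k = (\<Sum>i\<in>I. int (m i) * alv i k)"
    and m': "\<forall>k. x k - y k = (\<Sum>i\<in>I. int (m' i) * alv i k)"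
    using assms(2,3) unfolding leQ_iff by blast
  have sums: "(\<Sum>i\<in>I. int (m i + m' i) * alv i k) = (\<Sum>i\<in>I. 0 * alv i k)" for k
  proof -
    have "(\<Sum>i\<in>I. int (m i + m' i) * alv i k)
        = (\<Sum>i\<in>I. int (m i) * alv i k) + (\<Sum>i\<in>I. int (m' i) * alv i k)"
      by (simp add: algebra_simps sum.distrib)
    also have "\<dots> = (y k - x k) + (x k - y k)" using m m' by presburger
    finally show ?thesis by simp
  qed
  have "\<forall>i\<in>I. m i = 0"
    using free_family_coeff_eq[where c = "\<lambda>i. int (m i + m' i)" and d = "\<lambda>_. 0", OF assms(1) sums]
    by (simp del: of_nat_add)
  then show ?thesis using m by (simp add: fun_eq_iff)
qed

lemma leQ_sref:
  assumes "finite I" "i \<in> I" "0 \<le> pairing (al i) v"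
  shows "leQ I alv (sref al alv i v) v"
  unfolding leQ_iff
proof (intro exI[of _ "\<lambda>l. if l = i then nat (pairing (al i) v) else 0"] allI)
  fix k
  have "(\<Sum>l\<in>I. int (if l = i then nat (pairing (al i) v) else 0) * alv l k)
      = (\<Sum>l\<in>I. if l = i then pairing (al i) v * alv l k else 0)"
    using assms(3) by (intro sum.cong) auto
  then show "v k - sref al alv i v k
      = (\<Sum>l\<in>I. int (if l = i then nat (pairing (al i) v) else 0) * alv l k)"
    using assms(1,2) by (simp add: sref_def)
qed

lemma finite_leQ_interval:
  assumes "finite I" "free_family I alv"
  shows "finite {nu. leQ I alv mu nu \<and> leQ I alv nu lam}"
proof (cases "leQ I alv mu lam")
  case True
  then obtain C where C: "\<forall>k. lam k - mu k = (\<Sum>i\<in>I. int (C i) * alv i k)"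
    using True unfolding leQ_iff by blast
  define g where "g f = (\<lambda>k. mu k + (\<Sum>i\<in>I. int (f i) * alv i k))" for f :: "nat \<Rightarrow> nat"
  have "{nu. leQ I alv mu nu \<and> leQ I alv nu lam} \<subseteq> g ` (PiE I (\<lambda>i. {..C i}))"
  proof safe
    fix nu assume "leQ I alv mu nu" "leQ I alv nu lam"
    then obtain m m' where m: "\<forall>k. nu k - mu k = (\<Sum>i\<in>I. int (m i) * alv i k)"
      and m': "\<forall>k. lam k - nu k = (\<Sum>i\<in>I. int (m' i) * alv i k)"
      unfolding leQ_iff by blast
    have sums: "(\<Sum>i\<in>I. int (m i + m' i) * alv i k) = (\<Sum>i\<in>I. int (C i) * alv i k)" for k
      using m m' C by (simp add: algebra_simps sum.distrib)
    have "\<forall>i\<in>I. m i \<le> C i"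
      using free_family_coeff_eq[where c = "\<lambda>i. int (m i + m' i)", OF assms(2) sums]
      by (simp del: of_nat_add) (metis le_add1)
    then have "restrict m I \<in> PiE I (\<lambda>i. {..C i})" by auto
    moreover have "nu = g (restrict m I)"
      using m by (simp add: g_def fun_eq_iff algebra_simps)
    ultimately show "nu \<in> g ` (PiE I (\<lambda>i. {..C i}))" by blast
  qed
  moreover have "finite (PiE I (\<lambda>i. {..C i}))" using assms(1) by (intro finite_PiE) auto
  ultimately show ?thesis using finite_subset by blast
next
  case False
  then have "{nu. leQ I alv mu nu \<and> leQ I alv nu lam} = {}" using leQ_trans by blast
  then show ?thesis by (simp only: finite.emptyI)
qed

lemma finite_leQ_maximal:
  assumes "free_family I alv" "finite U" "mu \<in> U"
  obtains m where "m \<in> U" "\<And>z. z \<in> U \<Longrightarrow> leQ I alv m z \<Longrightarrow> z = m"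
proof -
  let ?less = "\<lambda>x y. leQ I alv x y \<and> x \<noteq> y"
  have "asymp_on U ?less"
    using leQ_antisym[OF assms(1)] by (auto simp: asymp_on_def)
  moreover have "transp_on U ?less"
    using leQ_trans leQ_antisym[OF assms(1)] unfolding transp_on_def by blast
  ultimately obtain m where "m \<in> U" "\<forall>z\<in>U. z \<noteq> m \<longrightarrow> \<not> ?less m z"
    using Finite_Set.bex_max_element[OF assms(2)] assms(3) by blast
  then show ?thesis using that by blast
qed

lemma almost_finite_subset: "almost_finite I alv F \<Longrightarrow> E \<subseteq> F \<Longrightarrow> almost_finite I alv E"
  unfolding almost_finite_def by blast

lemma fam_sum_single:
  assumes "j0 \<in> J" "\<And>j. j \<in> J \<Longrightarrow> j \<noteq> j0 \<Longrightarrow> f j lam = 0"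
  shows "fam_sum J f lam = f j0 lam"
proof -
  have "{j \<in> J. f j lam \<noteq> 0} = (if f j0 lam = 0 then {} else {j0})"
    using assms by auto
  then show ?thesis unfolding fam_sum_def by simp
qed

lemma supp_fam_sum: "supp (fam_sum J f) \<subseteq> (\<Union>j\<in>J. supp (f j))"
proof (rule subsetI, rule ccontr)
  fix mu assume "mu \<in> supp (fam_sum J f)" "mu \<notin> (\<Union>j\<in>J. supp (f j))"
  then have "{j \<in> J. f j mu \<noteq> 0} = {}" "fam_sum J f mu \<noteq> 0" by (auto simp: supp_def)
  then show False by (simp only: fam_sum_def sum.empty simp_thms)
qed

section \<open>Tits positivity and dominance\<close>

locale kac_moody_datum =
  fixes I :: "nat set" and al :: "nat \<Rightarrow> 'n::finite lat" and alv :: "nat \<Rightarrow> 'n lat"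
  assumes finite_I: "finite I"
    and free_coroots: "free_family I alv"
    and gcm: "gen_cartan_matrix I (cartan al alv)"
begin

abbreviation W :: "('n lat \<Rightarrow> 'n lat) set" where "W \<equiv> weyl_sub al alv I"
abbreviation len :: "('n lat \<Rightarrow> 'n lat) \<Rightarrow> nat" where "len \<equiv> wlength al alv I"
abbreviation r :: "nat \<Rightarrow> 'n lat \<Rightarrow> 'n lat" where "r \<equiv> sref al alv"
abbreviation le_Q :: "'n lat \<Rightarrow> 'n lat \<Rightarrow> bool" (infix "\<le>\<^sub>Q" 50)
  where "x \<le>\<^sub>Q y \<equiv> leQ I alv x y"

lemma cartan_diag: "i \<in> I \<Longrightarrow> pairing (al i) (alv i) = 2"
  using gcm unfolding gen_cartan_matrix_def cartan_def by auto

lemma cartan_offdiag_nonpos: "i \<in> I \<Longrightarrow> j \<in> I \<Longrightarrow> i \<noteq> j \<Longrightarrow> pairing (al j) (alv i) \<le> 0"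
  using gcm unfolding gen_cartan_matrix_def cartan_def by auto

lemma cartan_zero_iff:
  "i \<in> I \<Longrightarrow> j \<in> I \<Longrightarrow> pairing (al j) (alv i) = 0 \<longleftrightarrow> pairing (al i) (alv j) = 0"
  using gcm unfolding gen_cartan_matrix_def cartan_def by auto

lemma r_r_comp: "i \<in> I \<Longrightarrow> r i \<circ> (r i \<circ> f) = f"
  using sref_sref_comp cartan_diag by blast

text \<open>With \<open>r\<^sub>j\<close> the first letter of a reduced word of \<open>u\<close>, the
  induction reduces to the rank-2 case via a minimal decomposition \<open>u = x \<circ> v\<close>,
  \<open>x \<in> \<langle>r\<^sub>i, r\<^sub>j\<rangle>\<close>.\<close>

lemma pairing_weyl_dominant_nonneg:
  assumes "u \<in> W" "i \<in> I" "len u \<le> len (r i \<circ> u)" and lam: "lam \<in> Ypp I al"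
  shows "0 \<le> pairing (al i) (u lam)"
  using assms(1-3)
proof (induction "len u" arbitrary: u i rule: less_induct)
  case less
  from \<open>u \<in> W\<close> show ?case
  proof (cases rule: weyl_sub_cases)
    case 1
    then show ?thesis using lam less.prems(2) by (simp add: Ypp_def)
  next
    case (2 j u')
    then have shorter: "len (r j \<circ> u) < len u" using r_r_comp[OF \<open>j \<in> I\<close>, of u'] by simp
    have ij: "i \<noteq> j" using shorter less.prems(3) by auto
    let ?S = "{i, j}"
    have SI: "?S \<subseteq> I" using 2 less.prems(2) by auto
    obtain x v where x: "x \<in> weyl_sub al alv ?S" and v: "v \<in> W" and u: "u = x \<circ> v"
      and lens: "wlength al alv ?S x + len v \<le> len u" "len v < len u"
      and v_min: "\<And>k. k \<in> ?S \<Longrightarrow> len v \<le> len (r k \<circ> v)"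
      using parabolic_decomposition[OF less.prems(1) SI _ _ shorter] cartan_diag SI by blast
    have v_pos: "0 \<le> pairing (al k) (v lam)" if "k \<in> ?S" for k
      using less.hyps[OF lens(2) v _ v_min[OF that]] that SI by blast
    have "wlength al alv ?S x \<le> wlength al alv ?S (r i \<circ> x)"
      using parabolic_factor_length[OF SI _ x v u lens(1) less.prems(3)] by simp
    then obtain c d where "0 \<le> c" "0 \<le> d"
      "pairing (al i) (x (v lam)) = c * pairing (al i) (v lam) + d * pairing (al j) (v lam)"
      using rank2_positivity[OF ij cartan_diag cartan_diag cartan_offdiag_nonpos cartan_offdiag_nonpos
          cartan_zero_iff x] less.prems(2) 2(1) ij by metis
    then show ?thesis using u v_pos by simp
  qed
qed

lemma weyl_dominant_leQ:
  assumes "u \<in> W" "lam \<in> Ypp I al"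
  shows "u lam \<le>\<^sub>Q lam"
  using assms(1)
proof (induction "len u" arbitrary: u rule: less_induct)
  case less
  from \<open>u \<in> W\<close> show ?case
  proof (cases rule: weyl_sub_cases)
    case 1
    then show ?thesis by (simp add: leQ_refl)
  next
    case (2 i u')
    then have "len u' \<le> len (r i \<circ> u')" by simp
    then have "0 \<le> pairing (al i) (u' lam)"
      using pairing_weyl_dominant_nonneg[OF 2(2,1) _ assms(2)] by blast
    then have "u lam \<le>\<^sub>Q u' lam" using leQ_sref[OF finite_I 2(1)] 2(3) by simp
    then show ?thesis using less.hyps[OF 2(4,2)] leQ_trans by blast
  qed
qed

section \<open>Orbit sums\<close>

lemma weyl_inverse:
  assumes "w \<in> W"
  obtains w' where "w' \<in> W" "w' \<circ> w = id"
  using weyl_sub_inverse[OF assms] cartan_diag by blast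

definition orbit :: "'n lat \<Rightarrow> 'n lat set" where
  "orbit lam = (\<lambda>w. w lam) ` W"

lemma Eorb_eq: "Eorb I al alv lam mu = (if mu \<in> orbit lam then 1 else 0)"
  unfolding Eorb_def orbit_def weyl_eq_weyl_sub ..

lemma orbit_refl: "lam \<in> orbit lam"
  unfolding orbit_def by (rule image_eqI[where x = id]) (simp_all add: id_in_weyl_sub)

lemma orbit_closed: "w \<in> W \<Longrightarrow> mu \<in> orbit lam \<Longrightarrow> w mu \<in> orbit lam"
  unfolding orbit_def by (auto intro!: image_eqI[where x = "w \<circ> _"] weyl_sub_comp)

lemma orbit_sym:
  assumes "mu \<in> orbit lam"
  shows "lam \<in> orbit mu"
proof -
  obtain w where "w \<in> W" "mu = w lam" using assms unfolding orbit_def by auto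
  moreover obtain w' where "w' \<in> W" "w' \<circ> w = id" using weyl_inverse[OF \<open>w \<in> W\<close>] .
  ultimately have "w' mu = lam" by (simp add: pointfree_idE)
  then show ?thesis unfolding orbit_def using \<open>w' \<in> W\<close> by blast
qed

lemma orbit_trans: "nu \<in> orbit mu \<Longrightarrow> mu \<in> orbit lam \<Longrightarrow> nu \<in> orbit lam"
  unfolding orbit_def[of mu] using orbit_closed by auto

lemma orbit_weyl_iff:
  assumes "w \<in> W"
  shows "w mu \<in> orbit lam \<longleftrightarrow> mu \<in> orbit lam"
proof
  assume "w mu \<in> orbit lam"
  moreover have "mu \<in> orbit (w mu)" using orbit_sym orbit_closed[OF assms orbit_refl] .
  ultimately show "mu \<in> orbit lam" using orbit_trans by blast
qed (rule orbit_closed[OF assms])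

lemma orbit_leQ_dominant: "lam \<in> Ypp I al \<Longrightarrow> mu \<in> orbit lam \<Longrightarrow> mu \<le>\<^sub>Q lam"
  unfolding orbit_def using weyl_dominant_leQ by auto

lemma dominant_orbit_unique:
  assumes "lam \<in> Ypp I al" "lam' \<in> Ypp I al" "lam' \<in> orbit lam"
  shows "lam' = lam"
proof -
  have "lam' \<le>\<^sub>Q lam" using orbit_leQ_dominant[OF assms(1,3)] .
  moreover have "lam \<le>\<^sub>Q lam'" using orbit_leQ_dominant[OF assms(2) orbit_sym[OF assms(3)]] .
  ultimately show ?thesis using leQ_antisym[OF free_coroots] by blast
qed

lemma inv_series_orbit:
  assumes "a \<in> inv_series I al alv" "mu \<in> orbit lam"
  shows "a mu = a lam"
  using assms unfolding inv_series_def orbit_def weyl_eq_weyl_sub by auto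

lemma leQ_sref_ascent:
  assumes "i \<in> I" "pairing (al i) nu < 0"
  shows "nu \<le>\<^sub>Q r i nu" "r i nu \<noteq> nu"
proof -
  have "0 \<le> pairing (al i) (r i nu)" using assms cartan_diag by (simp add: pairing_sref)
  then have "r i (r i nu) \<le>\<^sub>Q r i nu" by (rule leQ_sref[OF finite_I assms(1)])
  then show "nu \<le>\<^sub>Q r i nu" using sref_involutive[of al i alv, OF cartan_diag[OF assms(1)]] by simp
  show "r i nu \<noteq> nu"
  proof
    assume "r i nu = nu"
    then have "pairing (al i) nu = - pairing (al i) nu"
      using pairing_sref[of "al i" al alv i nu] cartan_diag[OF assms(1)] by simp
    then show False using assms(2) by simp
  qed
qed

lemma inv_series_dominant_orbit:
  fixes a :: "'n lat \<Rightarrow> 'r::comm_ring_1"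
  assumes a: "a \<in> inv_series I al alv" and mu: "a mu \<noteq> 0"
  obtains lam where "lam \<in> Ypp I al" "mu \<in> orbit lam"
proof -
  obtain J where J: "finite J" "\<And>e. e \<in> supp a \<Longrightarrow> \<exists>j\<in>J. e \<le>\<^sub>Q j"
    using a unfolding inv_series_def series_def almost_finite_def by blast
  define Up where "Up = {nu \<in> orbit mu. mu \<le>\<^sub>Q nu}"
  have "Up \<subseteq> (\<Union>j\<in>J. {nu. mu \<le>\<^sub>Q nu \<and> nu \<le>\<^sub>Q j})"
  proof
    fix nu assume "nu \<in> Up"
    then have "a nu \<noteq> 0" "mu \<le>\<^sub>Q nu" using inv_series_orbit[OF a] mu unfolding Up_def by auto
    then show "nu \<in> (\<Union>j\<in>J. {nu. mu \<le>\<^sub>Q nu \<and> nu \<le>\<^sub>Q j})" using J(2) by (auto simp: supp_def)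
  qed
  then have "finite Up"
    by (rule finite_subset) (simp add: J(1) finite_leQ_interval[OF finite_I free_coroots])
  moreover have "mu \<in> Up" unfolding Up_def using orbit_refl leQ_refl by blast
  ultimately obtain nu where nu: "nu \<in> Up" and nu_max: "\<And>z. z \<in> Up \<Longrightarrow> nu \<le>\<^sub>Q z \<Longrightarrow> z = nu"
    using finite_leQ_maximal[OF free_coroots] by blast
  have "nu \<in> Ypp I al"
  proof (rule ccontr)
    assume "nu \<notin> Ypp I al"
    then obtain i where i: "i \<in> I" "pairing (al i) nu < 0" unfolding Ypp_def by force
    have "r i nu \<in> orbit mu" "mu \<le>\<^sub>Q nu"
      using nu orbit_closed[OF sref_in_weyl_sub[OF i(1)]] unfolding Up_def by auto
    then have "r i nu \<in> Up" using leQ_sref_ascent(1)[OF i] leQ_trans unfolding Up_def by blast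
    then show False using nu_max leQ_sref_ascent[OF i] by blast
  qed
  moreover have "mu \<in> orbit nu" using nu orbit_sym unfolding Up_def by blast
  ultimately show ?thesis using that by blast
qed

lemma summable_Eorb_family:
  fixes x :: "'n lat \<Rightarrow> 'r::comm_ring_1"
  assumes x: "x \<in> AF I al alv"
  shows "summable_fam I alv (Ypp I al) (\<lambda>lam mu. x lam * Eorb I al alv lam mu)"
  unfolding summable_fam_def
proof (intro conjI ballI allI)
  obtain J where J: "finite J" "\<And>e. e \<in> supp x \<Longrightarrow> \<exists>j\<in>J. e \<le>\<^sub>Q j"
    using x unfolding AF_def almost_finite_def by blast
  have below: "mu \<le>\<^sub>Q lam" if "lam \<in> Ypp I al" "x lam * Eorb I al alv lam mu \<noteq> 0" for lam mu
    using orbit_leQ_dominant that by (auto simp: Eorb_eq split: if_splits)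
  show "(\<lambda>mu. x lam * Eorb I al alv lam mu) \<in> series I alv" if "lam \<in> Ypp I al" for lam
    unfolding series_def almost_finite_def supp_def using below[OF that] by (intro CollectI exI[of _ "{lam}"]) auto
  show "finite {lam \<in> Ypp I al. x lam * Eorb I al alv lam mu \<noteq> 0}" for mu
  proof (rule finite_subset)
    show "{lam \<in> Ypp I al. x lam * Eorb I al alv lam mu \<noteq> 0}
        \<subseteq> (\<Union>j\<in>J. {nu. mu \<le>\<^sub>Q nu \<and> nu \<le>\<^sub>Q j})"
    proof
      fix lam assume lam: "lam \<in> {lam \<in> Ypp I al. x lam * Eorb I al alv lam mu \<noteq> 0}"
      then have "x lam \<noteq> 0" by auto
      then obtain j where "j \<in> J" "lam \<le>\<^sub>Q j" using J(2)[of lam] by (auto simp: supp_def)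
      with lam below show "lam \<in> (\<Union>j\<in>J. {nu. mu \<le>\<^sub>Q nu \<and> nu \<le>\<^sub>Q j})" by blast
    qed
    show "finite (\<Union>j\<in>J. {nu. mu \<le>\<^sub>Q nu \<and> nu \<le>\<^sub>Q j})"
      by (simp add: J(1) finite_leQ_interval[OF finite_I free_coroots])
  qed
  show "almost_finite I alv (\<Union>lam\<in>Ypp I al. supp (\<lambda>mu. x lam * Eorb I al alv lam mu))"
    unfolding almost_finite_def
  proof (intro exI conjI ballI)
    fix mu assume "mu \<in> (\<Union>lam\<in>Ypp I al. supp (\<lambda>mu. x lam * Eorb I al alv lam mu))"
    then obtain lam where lam: "lam \<in> Ypp I al" "x lam * Eorb I al alv lam mu \<noteq> 0"
      by (auto simp: supp_def)
    then have "x lam \<noteq> 0" by auto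
    then obtain j where "j \<in> J" "lam \<le>\<^sub>Q j" using J(2)[of lam] by (auto simp: supp_def)
    then show "\<exists>j\<in>J. mu \<le>\<^sub>Q j" using below[OF lam] leQ_trans by blast
  qed (rule J(1))
qed

lemma Emap_orbit:
  assumes "lam \<in> Ypp I al" "mu \<in> orbit lam"
  shows "Emap I al alv x mu = x lam"
proof -
  have "x l * Eorb I al alv l mu = 0" if "l \<in> Ypp I al" "l \<noteq> lam" for l
  proof -
    have "mu \<notin> orbit l"
    proof
      assume "mu \<in> orbit l"
      then have "l \<in> orbit lam" using orbit_sym orbit_trans assms(2) by blast
      then show False using dominant_orbit_unique[OF assms(1) that(1)] that(2) by blast
    qed
    then show ?thesis by (simp add: Eorb_eq)
  qed
  then have "Emap I al alv x mu = x lam * Eorb I al alv lam mu"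
    unfolding Emap_def
    by (rule fam_sum_single[where f = "\<lambda>l mu. x l * Eorb I al alv l mu", OF assms(1)])
  then show ?thesis using assms(2) by (simp add: Eorb_eq)
qed

lemma Emap_no_dominant:
  assumes "\<And>lam. lam \<in> Ypp I al \<Longrightarrow> mu \<notin> orbit lam"
  shows "Emap I al alv x mu = 0"
proof -
  have "x lam * Eorb I al alv lam mu = 0" if "lam \<in> Ypp I al" for lam
    using assms[OF that] by (simp add: Eorb_eq)
  then show ?thesis by (simp add: Emap_def fam_sum_def)
qed

lemma Emap_in_inv_series:
  fixes x :: "'n lat \<Rightarrow> 'r::comm_ring_1"
  assumes x: "x \<in> AF I al alv"
  shows "Emap I al alv x \<in> inv_series I al alv"
proof -
  have "supp (Emap I al alv x) \<subseteq> (\<Union>lam\<in>Ypp I al. supp (\<lambda>mu. x lam * Eorb I al alv lam mu))"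
    unfolding Emap_def by (rule supp_fam_sum)
  then have "Emap I al alv x \<in> series I alv"
    using summable_Eorb_family[OF x] almost_finite_subset unfolding summable_fam_def series_def by blast
  moreover have "Emap I al alv x (w mu) = Emap I al alv x mu" if "w \<in> W" for w mu
  proof (cases "\<exists>lam\<in>Ypp I al. mu \<in> orbit lam")
    case True
    then obtain lam where lam: "lam \<in> Ypp I al" "mu \<in> orbit lam" ..
    have "Emap I al alv x (w mu) = x lam" by (rule Emap_orbit[OF lam(1) orbit_closed[OF that lam(2)]])
    also have "\<dots> = Emap I al alv x mu" by (rule Emap_orbit[OF lam, symmetric])
    finally show ?thesis .
  next
    case False
    have "Emap I al alv x (w mu) = 0"
      by (rule Emap_no_dominant) (use False orbit_weyl_iff[OF that] in blast)
    moreover have "Emap I al alv x mu = 0"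
      by (rule Emap_no_dominant) (use False in blast)
    ultimately show ?thesis by simp
  qed
  ultimately show ?thesis unfolding inv_series_def weyl_eq_weyl_sub by blast
qed

lemma restrict_dominant_in_AF:
  fixes a :: "'n lat \<Rightarrow> 'r::comm_ring_1"
  assumes "a \<in> inv_series I al alv"
  shows "(\<lambda>lam. if lam \<in> Ypp I al then a lam else 0) \<in> AF I al alv"
proof -
  have "almost_finite I alv (supp a)" using assms unfolding inv_series_def series_def by simp
  moreover have "supp (\<lambda>lam. if lam \<in> Ypp I al then a lam else 0) \<subseteq> supp a"
    unfolding supp_def by auto
  ultimately show ?thesis unfolding AF_def using almost_finite_subset by auto
qed

lemma Emap_restrict_dominant:
  fixes a :: "'n lat \<Rightarrow> 'r::comm_ring_1"
  assumes a: "a \<in> inv_series I al alv"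
  shows "Emap I al alv (\<lambda>lam. if lam \<in> Ypp I al then a lam else 0) = a"
proof
  fix mu
  show "Emap I al alv (\<lambda>lam. if lam \<in> Ypp I al then a lam else 0) mu = a mu"
  proof (cases "\<exists>lam\<in>Ypp I al. mu \<in> orbit lam")
    case True
    then obtain lam where lam: "lam \<in> Ypp I al" "mu \<in> orbit lam" ..
    have "Emap I al alv (\<lambda>lam. if lam \<in> Ypp I al then a lam else 0) mu = a lam"
      using Emap_orbit[OF lam, of "\<lambda>lam. if lam \<in> Ypp I al then a lam else 0"] lam(1) by simp
    then show ?thesis using inv_series_orbit[OF a lam(2)] by simp
  next
    case False
    have "a mu = 0"
    proof (rule ccontr)
      assume "a mu \<noteq> 0"
      then obtain lam where "lam \<in> Ypp I al" "mu \<in> orbit lam"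
        by (rule inv_series_dominant_orbit[OF a])
      then show False using False by blast
    qed
    moreover have "Emap I al alv (\<lambda>lam. if lam \<in> Ypp I al then a lam else 0) mu = 0"
      using False Emap_no_dominant by blast
    ultimately show ?thesis by simp
  qed
qed

lemma Emap_bij:
  "bij_betw (Emap I al alv) (AF I al alv) (inv_series I al alv :: ('n lat \<Rightarrow> 'r::comm_ring_1) set)"
proof (rule bij_betw_imageI)
  show "inj_on (Emap I al alv) (AF I al alv :: ('n lat \<Rightarrow> 'r) set)"
  proof (rule inj_onI, rule ext)
    fix x y :: "'n lat \<Rightarrow> 'r" and lam
    assume "x \<in> AF I al alv" "y \<in> AF I al alv" "Emap I al alv x = Emap I al alv y"
    then show "x lam = y lam"
      using Emap_orbit[OF _ orbit_refl, of lam x] Emap_orbit[OF _ orbit_refl, of lam y]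
      unfolding AF_def by (cases "lam \<in> Ypp I al") simp_all
  qed
  show "Emap I al alv ` AF I al alv = (inv_series I al alv :: ('n lat \<Rightarrow> 'r) set)"
    using Emap_in_inv_series restrict_dominant_in_AF Emap_restrict_dominant
    by (blast intro: image_eqI[OF sym])
qed

lemma inv_series_supp_tits_cone:
  fixes a :: "'n lat \<Rightarrow> 'r::comm_ring_1"
  assumes "a \<in> inv_series I al alv"
  shows "supp a \<subseteq> Yp I al alv"
proof
  fix mu assume "mu \<in> supp a"
  then obtain lam where "lam \<in> Ypp I al" "mu \<in> orbit lam"
    using inv_series_dominant_orbit[OF assms] by (auto simp: supp_def)
  then show "mu \<in> Yp I al alv" unfolding Yp_def orbit_def weyl_eq_weyl_sub by auto
qed

end

theorem mainTheorem3:
  fixes I :: "nat set"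
    and al :: "nat \<Rightarrow> 'n::finite lat"
    and alv :: "nat \<Rightarrow> 'n lat"
  assumes "finite I"
    and "free_family I al"
    and "free_family I alv"
    and "gen_cartan_matrix I (cartan al alv)"
  shows "(\<forall>x \<in> (AF I al alv :: ('n lat \<Rightarrow> 'r::comm_ring_1) set).
            summable_fam I alv (Ypp I al) (\<lambda>lam mu. x lam * Eorb I al alv lam mu))
       \<and> bij_betw (Emap I al alv) (AF I al alv) (inv_series I al alv :: ('n lat \<Rightarrow> 'r) set)
       \<and> (\<forall>a \<in> (inv_series I al alv :: ('n lat \<Rightarrow> 'r) set). supp a \<subseteq> Yp I al alv)"
proof -
  interpret kac_moody_datum I al alv
    using assms(1,3,4) by unfold_locales
  show ?thesis using summable_Eorb_family Emap_bij inv_series_supp_tits_cone by blast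
qed

end
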